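(* Let $Q=(q_n)_{n\ge1}$ be a basic sequence that is infinite in limit and grows slowly, i.e. there is a constant $M$ with $\omega_n\le M$ for all $n\ge1$. Then $\dim_H\Theta_Q=\dim_B\Theta_Q=0$ (in particular the box-counting dimension of $\Theta_Q$ exists).
   Context: A basic sequence is a sequence $Q=(q_n)_{n\ge1}$ of integers with $q_n\ge 2$; it is infinite in limit if $q_n\to\infty$. $\mathbb{N}$ denotes the positive integers. For each positive integer $j$ let $\nu_j=\min\{N : q_m\ge 2j^2 \text{ for all } m\ge N\}$. Define $l_1=\max(\nu_2-1,1)$ and, recursively for $i\ge 2$, $l_i=\max\big(\min\{k\in\mathbb{N} : l_1+2l_2+\cdots+(i-1)l_{i-1}+ik\ge \nu_{i+1}-1\},1\big)$. Put $L_i=\sum_{j=1}^i jl_j$ (with $L_0=0$). Let $S_Q=\{(a,b,c)\in\mathbb{N}^3 : b\le l_a,\ c\le a\}$ and $\phi_Q(a,b,c)=L_{a-1}+(b-1)a+c$; $\phi_Q$ is a bijection $S_Q\to\mathbb{N}$. A $Q$-special sequence is a family of integers $F=(F_{(a,b,c)})_{(a,b,c)\in S_Q}$ with $F_{(a,b,1)}=0$ for all $(a,b,1)\in S_Q$ and $\frac{F_{(a,b,c)}}{q_{\phi_Q(a,b,c)}}\in\left[\frac{c-1}{a}-\frac{1}{2a^2},\frac{c-1}{a}+\frac{1}{2a^2}\right]$ for $(a,b,c)\in S_Q$ with $c>1$. Let $\Gamma_Q$ be the set of $Q$-special sequences. For $F\in\Gamma_Q$ put $E_{F,n}=F_{\phi_Q^{-1}(n)}$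 and $x_F=\sum_{n=1}^\infty \frac{E_{F,n}}{q_1q_2\cdots q_n}$. Define $\Theta_Q=\{x_F : F\in\Gamma_Q\}\subseteq[0,1)$ and $\omega_n=\#\{E_{F,n} : F\in\Gamma_Q\}$. $\dim_H$ denotes Hausdorff dimension. For nonempty $J\subseteq[0,1)$, let $C_\delta(J)$ be the smallest number of sets of diameter at most $\delta$ covering $J$; the box-counting dimension is $\dim_B J=\lim_{\delta\to0}\frac{\log C_\delta(J)}{-\log\delta}$ when this limit exists. *)

theory Defs
  imports "HOL-Analysis.Analysis"
begin

section \<open>Basic sequences (q 0 is ignored; indices start at 1)\<close>

definition basic_seq :: "(nat \<Rightarrow> nat) \<Rightarrow> bool" where
  "basic_seq q \<longleftrightarrow> (\<forall>n\<ge>1. q n \<ge> 2)"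

definition infinite_in_limit :: "(nat \<Rightarrow> nat) \<Rightarrow> bool" where
  "infinite_in_limit q \<longleftrightarrow> filterlim q at_top sequentially"

definition nu :: "(nat \<Rightarrow> nat) \<Rightarrow> nat \<Rightarrow> nat" where
  "nu q j = (LEAST N. N \<ge> 1 \<and> (\<forall>m\<ge>N. q m \<ge> 2 * j^2))"

text \<open>lstep q i Lprev computes l_(i+1) from L_i = Lprev.\<close>
definition lstep :: "(nat \<Rightarrow> nat) \<Rightarrow> nat \<Rightarrow> nat \<Rightarrow> nat" where
  "lstep q i Lprev =
     (if i = 0 then max (nu q 2 - 1) 1
      else max (LEAST k. k \<ge> 1 \<and> Lprev + Suc i * k \<ge> nu q (i + 2) - 1) 1)"

fun Lq :: "(nat \<Rightarrow> nat) \<Rightarrow> nat \<Rightarrow> nat" where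
  "Lq q 0 = 0"
| "Lq q (Suc i) = Lq q i + Suc i * lstep q i (Lq q i)"

fun lq :: "(nat \<Rightarrow> nat) \<Rightarrow> nat \<Rightarrow> nat" where
  "lq q 0 = 0"
| "lq q (Suc i) = lstep q i (Lq q i)"

definition SQ :: "(nat \<Rightarrow> nat) \<Rightarrow> (nat \<times> nat \<times> nat) set" where
  "SQ q = {(a, b, c). 1 \<le> a \<and> 1 \<le> b \<and> 1 \<le> c \<and> b \<le> lq q a \<and> c \<le> a}"

definition phiQ :: "(nat \<Rightarrow> nat) \<Rightarrow> nat \<times> nat \<times> nat \<Rightarrow> nat" where
  "phiQ q t = (case t of (a, b, c) \<Rightarrow> Lq q (a - 1) + (b - 1) * a + c)"

text \<open>Q-special sequences: families of integers indexed by S_Q (values outside S_Q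
  are irrelevant and never used).\<close>
definition GammaQ :: "(nat \<Rightarrow> nat) \<Rightarrow> (nat \<times> nat \<times> nat \<Rightarrow> int) set" where
  "GammaQ q = {F. (\<forall>a b. (a, b, 1) \<in> SQ q \<longrightarrow> F (a, b, 1) = 0) \<and>
     (\<forall>a b c. (a, b, c) \<in> SQ q \<and> c > 1 \<longrightarrow>
        real_of_int (F (a, b, c)) / real (q (phiQ q (a, b, c)))
          \<in> {(real c - 1) / real a - 1 / (2 * real a ^ 2) ..
             (real c - 1) / real a + 1 / (2 * real a ^ 2)})}"

definition EF :: "(nat \<Rightarrow> nat) \<Rightarrow> (nat \<times> nat \<times> nat \<Rightarrow> int) \<Rightarrow> nat \<Rightarrow> int" where
  "EF q F n = F (inv_into (SQ q) (phiQ q) n)"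

definition xF :: "(nat \<Rightarrow> nat) \<Rightarrow> (nat \<times> nat \<times> nat \<Rightarrow> int) \<Rightarrow> real" where
  "xF q F = (\<Sum>n. real_of_int (EF q F (Suc n)) / (\<Prod>k = 1..Suc n. real (q k)))"

definition ThetaQ :: "(nat \<Rightarrow> nat) \<Rightarrow> real set" where
  "ThetaQ q = xF q ` GammaQ q"

definition omegaQ :: "(nat \<Rightarrow> nat) \<Rightarrow> nat \<Rightarrow> nat" where
  "omegaQ q n = card ((\<lambda>F. EF q F n) ` GammaQ q)"

text \<open>Contribution |U|^s of a covering set (with |empty|^s = 0 and the convention 0^0 = 1).\<close>
definition diam_pow :: "real \<Rightarrow> real set \<Rightarrow> real" where
  "diam_pow s U = (if U = {} then 0 else if s = 0 then 1 else diameter U powr s)"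

definition hausdorff_content :: "real \<Rightarrow> real \<Rightarrow> real set \<Rightarrow> ennreal" where
  "hausdorff_content s \<delta> A =
     (INF U \<in> {U :: nat \<Rightarrow> real set. A \<subseteq> (\<Union>n. U n) \<and>
                  (\<forall>n. bounded (U n) \<and> diameter (U n) \<le> \<delta>)}.
        (\<Sum>n. ennreal (diam_pow s (U n))))"

definition hausdorff_measure :: "real \<Rightarrow> real set \<Rightarrow> ennreal" where
  "hausdorff_measure s A = (SUP \<delta> \<in> {0<..}. hausdorff_content s \<delta> A)"

definition hausdorff_dim :: "real set \<Rightarrow> real" where
  "hausdorff_dim A = Inf {s. 0 \<le> s \<and> hausdorff_measure s A = 0}"

definition covering_number :: "real \<Rightarrow> real set \<Rightarrow> nat" where
  "covering_number \<delta> J = (LEAST n. \<exists>U :: nat \<Rightarrow> real set.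
      J \<subseteq> (\<Union>i<n. U i) \<and> (\<forall>i<n. bounded (U i) \<and> diameter (U i) \<le> \<delta>))"

definition has_box_dim :: "real set \<Rightarrow> real \<Rightarrow> bool" where
  "has_box_dim J d \<longleftrightarrow>
     ((\<lambda>\<delta>. ln (real (covering_number \<delta> J)) / - ln \<delta>) \<longlongrightarrow> d) (at_right 0)"

end

theory Submission
  imports Defs
begin

text \<open>Every \<open>x\<^sub>F\<close> lies in the interval of length \<open>1 / (q\<^sub>1\<cdots>q\<^sub>n)\<close> starting at the \<open>n\<close>-th partial
  sum of its series, and since the \<open>k\<close>-th digit takes at most \<open>M\<close> values there are at most
  \<open>M\<^sup>n\<close> such partial sums. As \<open>q\<^sub>n \<rightarrow> \<infinity>\<close>, \<open>ln (q\<^sub>1\<cdots>q\<^sub>n)\<close> outgrows every multiple of \<open>n\<close>,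
  so \<open>ln (M\<^sup>n)\<close> is negligible against \<open>-ln\<close> of the interval length: the box-counting
  dimension is \<open>0\<close>, and the Hausdorff dimension, which never exceeds it, is \<open>0\<close> as well.\<close>

lemma indexed_cover_of_finite_cover:
  assumes "finite \<U>" "J \<subseteq> \<Union>\<U>" "\<And>U. U \<in> \<U> \<Longrightarrow> bounded U \<and> diameter U \<le> \<delta>"
  shows "\<exists>U. J \<subseteq> (\<Union>i<card \<U>. U i) \<and> (\<forall>i<card \<U>. bounded (U i) \<and> diameter (U i) \<le> \<delta>)"
proof -
  obtain h where "bij_betw h {0..<card \<U>} \<U>"
    using ex_bij_betw_nat_finite[OF assms(1)] by blast
  then have "h ` {..<card \<U>} = \<U>"
    by (simp add: bij_betw_def atLeast0LessThan)
  then show ?thesis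
    using assms(2,3) by (intro exI[of _ h]) auto
qed

lemma covering_number_le_card:
  assumes "finite \<U>" "J \<subseteq> \<Union>\<U>" "\<And>U. U \<in> \<U> \<Longrightarrow> bounded U \<and> diameter U \<le> \<delta>"
  shows "covering_number \<delta> J \<le> card \<U>"
  unfolding covering_number_def by (rule Least_le) (rule indexed_cover_of_finite_cover[OF assms])

lemma covering_number_le_card_intervals:
  assumes "finite A" "J \<subseteq> (\<Union>a\<in>A. {a..a + d})" "0 \<le> d" "d \<le> \<delta>"
  shows "covering_number \<delta> J \<le> card A"
proof -
  have "covering_number \<delta> J \<le> card ((\<lambda>a. {a..a + d}) ` A)"
    using assms by (intro covering_number_le_card) auto
  also have "\<dots> \<le> card A"
    by (rule card_image_le[OF assms(1)])
  finally show ?thesis .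
qed

lemma covering_number_attained:
  assumes "finite \<U>" "J \<subseteq> \<Union>\<U>" "\<And>U. U \<in> \<U> \<Longrightarrow> bounded U \<and> diameter U \<le> \<delta>"
  shows "\<exists>U. J \<subseteq> (\<Union>i<covering_number \<delta> J. U i) \<and>
    (\<forall>i<covering_number \<delta> J. bounded (U i) \<and> diameter (U i) \<le> \<delta>)"
  unfolding covering_number_def by (rule LeastI) (rule indexed_cover_of_finite_cover[OF assms])

lemma finite_cover_if_bounded:
  fixes J :: "real set"
  assumes "bounded J" "0 < \<delta>"
  obtains \<U> where "finite \<U>" "J \<subseteq> \<Union>\<U>" "\<And>U. U \<in> \<U> \<Longrightarrow> bounded U \<and> diameter U \<le> \<delta>"
proof -
  have "compact (closure J)"
    using assms(1) by simp
  then obtain k where k: "finite k" "closure J \<subseteq> (\<Union>x\<in>k. ball x (\<delta> / 2))"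
    using assms(2) unfolding compact_eq_totally_bounded by (meson half_gt_zero)
  show ?thesis
  proof (rule that[of "(\<lambda>x. ball x (\<delta> / 2)) ` k"])
    show "J \<subseteq> \<Union> ((\<lambda>x. ball x (\<delta> / 2)) ` k)"
      using k(2) closure_subset by blast
  qed (use k(1) assms(2) in auto)
qed

lemma diam_pow_le:
  assumes "bounded U" "diameter U \<le> \<delta>" "0 < s"
  shows "diam_pow s U \<le> \<delta> powr s"
proof -
  have "diameter U powr s \<le> \<delta> powr s"
    using assms by (intro powr_mono2 diameter_ge_0) auto
  then show ?thesis
    using assms(3) by (simp add: diam_pow_def)
qed

lemma hausdorff_content_le_covering_number:
  fixes J :: "real set"
  assumes "bounded J" "0 < \<delta>" "0 < s"
  shows "hausdorff_content s \<delta> J \<le> ennreal (covering_number \<delta> J * \<delta> powr s)"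
  \<comment> \<open>Boundedness makes the \<open>LEAST\<close> in \<open>covering_number\<close> attained; otherwise it is \<open>0\<close>.\<close>
proof -
  define C where "C = covering_number \<delta> J"
  obtain \<U> where \<U>: "finite \<U>" "J \<subseteq> \<Union>\<U>" "\<And>U. U \<in> \<U> \<Longrightarrow> bounded U \<and> diameter U \<le> \<delta>"
    using finite_cover_if_bounded[OF assms(1,2)] by blast
  obtain U where U: "J \<subseteq> (\<Union>i<C. U i)" "\<And>i. i < C \<Longrightarrow> bounded (U i) \<and> diameter (U i) \<le> \<delta>"
    using covering_number_attained[OF \<U>] unfolding C_def by blast
  define V where "V i = (if i < C then U i else {})" for i
  have "J \<subseteq> (\<Union>i. V i)" "\<forall>i. bounded (V i) \<and> diameter (V i) \<le> \<delta>"
    using U assms(2) by (auto simp: V_def)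
  then have "hausdorff_content s \<delta> J \<le> (\<Sum>i. ennreal (diam_pow s (V i)))"
    unfolding hausdorff_content_def by (intro INF_lower) blast
  also have "\<dots> = (\<Sum>i<C. ennreal (diam_pow s (V i)))"
    by (rule suminf_finite) (auto simp: V_def diam_pow_def)
  also have "\<dots> \<le> (\<Sum>i<C. ennreal (\<delta> powr s))"
    using U(2) assms(3) by (intro sum_mono ennreal_leI diam_pow_le) (auto simp: V_def)
  also have "\<dots> = ennreal (\<Sum>i<C. \<delta> powr s)"
    by (rule sum_ennreal) simp
  finally show ?thesis
    by (simp add: C_def)
qed

lemma hausdorff_content_antimono:
  "\<delta>' \<le> \<delta> \<Longrightarrow> hausdorff_content s \<delta> J \<le> hausdorff_content s \<delta>' J"
  unfolding hausdorff_content_def by (rule INF_superset_mono) (auto intro: order_trans)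

lemma hausdorff_dim_eq_0I:
  assumes "\<And>s. 0 < s \<Longrightarrow> hausdorff_measure s J = 0"
  shows "hausdorff_dim J = 0"
proof -
  define S where "S = {s. 0 \<le> s \<and> hausdorff_measure s J = 0}"
  have pos: "s \<in> S" if "0 < s" for s
    using assms that by (simp add: S_def)
  have below: "bdd_below S"
    by (rule bdd_belowI[of _ 0]) (simp add: S_def)
  have "S \<noteq> {}"
    using pos[of 1] by auto
  then have "0 \<le> Inf S"
    by (rule cInf_greatest) (simp add: S_def)
  moreover have "Inf S \<le> 0"
  proof (rule dense_ge)
    show "Inf S \<le> e" if "0 < e" for e
      using pos[OF that] below by (rule cInf_lower)
  qed
  ultimately have "Inf S = 0"
    by simp
  then show ?thesis
    unfolding hausdorff_dim_def S_def .
qed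

lemma nat_times_powr_le_if_ln_le:
  assumes "0 < \<delta>" "ln (real C) \<le> a * - ln \<delta>"
  shows "real C * \<delta> powr s \<le> \<delta> powr (s - a)"
proof (cases "C = 0")
  case False
  then have "real C \<le> exp (a * - ln \<delta>)"
    using assms(2) by (metis exp_le_cancel_iff exp_ln of_nat_0_less_iff not_gr_zero)
  also have "\<dots> = \<delta> powr (- a)"
    using assms(1) by (simp add: powr_def)
  finally have "real C * \<delta> powr s \<le> \<delta> powr (- a) * \<delta> powr s"
    by (rule mult_right_mono) simp
  then show ?thesis
    by (simp add: powr_add[symmetric])
qed simp

lemma hausdorff_content_le_powr_half:
  fixes J :: "real set"
  assumes "bounded J" "0 < s" "0 < \<delta>" "\<delta> < 1"
    and "ln (real (covering_number \<delta> J)) / - ln \<delta> < s / 2"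
  shows "hausdorff_content s \<delta> J \<le> ennreal (\<delta> powr (s / 2))"
proof -
  have "0 < - ln \<delta>"
    using assms(3,4) by simp
  with assms(5) have "ln (real (covering_number \<delta> J)) \<le> s / 2 * - ln \<delta>"
    unfolding pos_divide_less_eq[OF \<open>0 < - ln \<delta>\<close>] by (metis less_imp_le mult.commute)
  then have "real (covering_number \<delta> J) * \<delta> powr s \<le> \<delta> powr (s - s / 2)"
    using assms(3) by (intro nat_times_powr_le_if_ln_le)
  moreover have "s - s / 2 = s / 2"
    by simp
  ultimately have "real (covering_number \<delta> J) * \<delta> powr s \<le> \<delta> powr (s / 2)"
    by simp
  then show ?thesis
    using hausdorff_content_le_covering_number[OF assms(1,3,2)] by (meson ennreal_leI order_trans)
qed

lemma hausdorff_dim_eq_0_if_box_dim_0: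
  fixes J :: "real set"
  assumes "bounded J" "has_box_dim J 0"
  shows "hausdorff_dim J = 0"
proof (rule hausdorff_dim_eq_0I)
  fix s :: real assume s: "0 < s"
  have "hausdorff_content s \<delta>0 J = 0" if "0 < \<delta>0" for \<delta>0
  proof -
    have "\<forall>\<^sub>F \<delta> in at_right 0. ln (real (covering_number \<delta> J)) / - ln \<delta> < s / 2"
      using assms(2) s unfolding has_box_dim_def by (intro order_tendstoD(2)) auto
    moreover have "\<forall>\<^sub>F \<delta> in at_right 0. 0 < \<delta> \<and> \<delta> < 1 \<and> \<delta> \<le> \<delta>0"
      using that by (auto simp: eventually_at_right_field intro!: exI[of _ "min 1 \<delta>0"])
    ultimately have "\<forall>\<^sub>F \<delta> in at_right 0. hausdorff_content s \<delta>0 J \<le> ennreal (\<delta> powr (s / 2))"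
    proof eventually_elim
      case (elim \<delta>)
      then show ?case
        using hausdorff_content_antimono[of \<delta> \<delta>0] hausdorff_content_le_powr_half[OF assms(1) s]
        by (meson order_trans)
    qed
    moreover have "((\<lambda>\<delta>. ennreal (\<delta> powr (s / 2))) \<longlongrightarrow> 0) (at_right 0)"
      using s by (auto intro!: tendsto_zero_powrI tendsto_ennrealI[of _ 0, simplified]
          simp: eventually_at_right_field)
    ultimately have "hausdorff_content s \<delta>0 J \<le> 0"
      by (intro tendsto_le[OF trivial_limit_at_right_real]) auto
    then show ?thesis
      by simp
  qed
  then show "hausdorff_measure s J = 0"
    unfolding hausdorff_measure_def by simp
qed

lemma crossing_index:
  fixes r :: "nat \<Rightarrow> real"
  assumes "\<delta> < r N" "\<forall>\<^sub>F n in sequentially. r n \<le> \<delta>"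
  obtains m where "N \<le> m" "r (Suc m) \<le> \<delta>" "\<delta> < r m"
proof -
  have "\<exists>m\<ge>N. r (Suc m) \<le> \<delta> \<and> \<delta> < r m"
  proof (rule ccontr)
    assume none: "\<not> ?thesis"
    have "\<delta> < r n" if "N \<le> n" for n
      using that
    proof (induction n rule: dec_induct)
      case (step m)
      then show ?case
        using none by (meson not_le)
    qed (rule assms(1))
    moreover obtain n where "N \<le> n" "r n \<le> \<delta>"
      using assms(2) unfolding eventually_sequentially by (meson nle_le)
    ultimately show False
      by fastforce
  qed
  then show ?thesis
    using that by blast
qed

lemma ln_covering_number_le:
  fixes J :: "real set" and A :: "nat \<Rightarrow> real set" and r :: "nat \<Rightarrow> real"
  assumes fin: "\<And>n. finite (A n)" and cover: "\<And>n. J \<subseteq> (\<Union>a\<in>A n. {a..a + r n})"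
    and r_pos: "\<And>n. 0 < r n" and r_lim: "r \<longlonglongrightarrow> 0"
    and thin: "\<And>n. N \<le> n \<Longrightarrow> ln (card (A (Suc n))) \<le> c * - ln (r n)"
    and "0 \<le> c" "0 < \<delta>" "\<delta> < r N"
  shows "ln (real (covering_number \<delta> J)) \<le> c * - ln \<delta>"
proof -
  have "\<forall>\<^sub>F n in sequentially. r n \<le> \<delta>"
    using order_tendstoD(2)[OF r_lim \<open>0 < \<delta>\<close>] by eventually_elim simp
  then obtain m where m: "N \<le> m" "r (Suc m) \<le> \<delta>" "\<delta> < r m"
    using crossing_index[of \<delta> r N] \<open>\<delta> < r N\<close> by blast
  have "covering_number \<delta> J \<le> card (A (Suc m))"
    using covering_number_le_card_intervals[OF fin cover _ m(2)] r_pos less_imp_le by blast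
  then have "ln (real (covering_number \<delta> J)) \<le> ln (card (A (Suc m)))"
    by (cases "covering_number \<delta> J = 0"; cases "card (A (Suc m)) = 0") auto
  also have "\<dots> \<le> c * - ln (r m)"
    using thin[OF m(1)] .
  also have "\<dots> \<le> c * - ln \<delta>"
    using assms(6,7) m(3) by (intro mult_left_mono) auto
  finally show ?thesis .
qed

lemma box_dim_0_if_interval_covers:
  fixes J :: "real set" and A :: "nat \<Rightarrow> real set" and r :: "nat \<Rightarrow> real"
  assumes fin: "\<And>n. finite (A n)" and cover: "\<And>n. J \<subseteq> (\<Union>a\<in>A n. {a..a + r n})"
    and r_pos: "\<And>n. 0 < r n" and r_lim: "r \<longlonglongrightarrow> 0"
    and thin: "\<And>e. 0 < e \<Longrightarrow> \<forall>\<^sub>F n in sequentially. ln (card (A (Suc n))) \<le> e * - ln (r n)"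
  shows "has_box_dim J 0"
  unfolding has_box_dim_def
proof (rule order_tendstoI)
  fix a :: real assume "a < 0"
  have "\<forall>\<^sub>F \<delta> in at_right 0. 0 < \<delta> \<and> \<delta> < (1::real)"
    by (auto simp: eventually_at_right_field intro!: exI[of _ 1])
  then show "\<forall>\<^sub>F \<delta> in at_right 0. a < ln (real (covering_number \<delta> J)) / - ln \<delta>"
  proof eventually_elim
    case (elim \<delta>)
    have "0 \<le> ln (real (covering_number \<delta> J))"
      by (cases "covering_number \<delta> J = 0") auto
    moreover have "0 < - ln \<delta>"
      using elim by simp
    ultimately show ?case
      using \<open>a < 0\<close> divide_nonneg_pos by (metis less_le_trans)
  qed
next
  fix e :: real assume e: "0 < e"
  obtain N where N: "\<And>n. N \<le> n \<Longrightarrow> ln (card (A (Suc n))) \<le> e / 2 * - ln (r n) \<and> r n < 1"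
    using eventually_conj[OF thin[of "e / 2"] order_tendstoD(2)[OF r_lim, of 1]] e
    unfolding eventually_sequentially by auto
  show "\<forall>\<^sub>F \<delta> in at_right 0. ln (real (covering_number \<delta> J)) / - ln \<delta> < e"
    unfolding eventually_at_right_field
  proof (intro exI conjI allI impI)
    show "0 < r N"
      by (rule r_pos)
    fix \<delta> :: real assume "0 < \<delta>" "\<delta> < r N"
    then have "ln (real (covering_number \<delta> J)) \<le> e / 2 * - ln \<delta>"
      using N e by (intro ln_covering_number_le[OF fin cover r_pos r_lim, of N]) auto
    moreover have "0 < - ln \<delta>"
      using N[of N] \<open>0 < \<delta>\<close> \<open>\<delta> < r N\<close> by simp
    ultimately have "ln (real (covering_number \<delta> J)) / - ln \<delta> \<le> e / 2"
      by (subst pos_divide_le_eq) auto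
    then show "ln (real (covering_number \<delta> J)) / - ln \<delta> < e"
      using e by linarith
  qed
qed

lemma dims_eq_0_if_interval_covers:
  fixes J :: "real set" and A :: "nat \<Rightarrow> real set" and r :: "nat \<Rightarrow> real"
  assumes "\<And>n. finite (A n)" "\<And>n. J \<subseteq> (\<Union>a\<in>A n. {a..a + r n})"
    and "\<And>n. 0 < r n" "r \<longlonglongrightarrow> 0"
    and "\<And>e. 0 < e \<Longrightarrow> \<forall>\<^sub>F n in sequentially. ln (card (A (Suc n))) \<le> e * - ln (r n)"
  shows "hausdorff_dim J = 0 \<and> has_box_dim J 0"
proof -
  have "bounded J"
    using assms(1,2) by (meson bounded_UN bounded_closed_interval bounded_subset)
  moreover have "has_box_dim J 0"
    using assms by (rule box_dim_0_if_interval_covers)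
  ultimately show ?thesis
    using hausdorff_dim_eq_0_if_box_dim_0 by blast
qed

definition qprod :: "(nat \<Rightarrow> nat) \<Rightarrow> nat \<Rightarrow> real" where
  "qprod q n = (\<Prod>k = 1..n. real (q k))"

definition cantor_partial :: "(nat \<Rightarrow> nat) \<Rightarrow> (nat \<Rightarrow> int) \<Rightarrow> nat \<Rightarrow> real" where
  "cantor_partial q d n = (\<Sum>k = 1..n. real_of_int (d k) / qprod q k)"

lemma qprod_Suc: "qprod q (Suc n) = qprod q n * real (q (Suc n))"
  by (simp add: qprod_def prod.nat_ivl_Suc')

lemma cantor_partial_0 [simp]: "cantor_partial q d 0 = 0"
  by (simp add: cantor_partial_def)

lemma cantor_partial_Suc:
  "cantor_partial q d (Suc n) = cantor_partial q d n + real_of_int (d (Suc n)) / qprod q (Suc n)"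
  by (simp add: cantor_partial_def sum.nat_ivl_Suc')

lemma qprod_ge_pow2:
  assumes "basic_seq q"
  shows "2 ^ n \<le> qprod q n"
proof -
  have "(\<Prod>k = 1..n. 2) \<le> (\<Prod>k = 1..n. real (q k))"
    using assms by (intro prod_mono) (auto simp: basic_seq_def)
  then show ?thesis
    by (simp add: qprod_def)
qed

lemma qprod_pos: "basic_seq q \<Longrightarrow> 0 < qprod q n"
  using qprod_ge_pow2 by (smt (verit) zero_less_power)

lemma inverse_qprod_tendsto_0:
  assumes "basic_seq q"
  shows "(\<lambda>n. 1 / qprod q n) \<longlonglongrightarrow> 0"
proof (rule tendsto_sandwich[OF _ _ tendsto_const LIMSEQ_power_zero])
  show "\<forall>\<^sub>F n in sequentially. 0 \<le> 1 / qprod q n"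
    using qprod_pos[OF assms] by (simp add: less_imp_le)
  show "\<forall>\<^sub>F n in sequentially. 1 / qprod q n \<le> (1 / 2) ^ n"
  proof (intro always_eventually allI)
    fix n
    have "1 / qprod q n \<le> 1 / 2 ^ n"
      using qprod_ge_pow2[OF assms, of n] qprod_pos[OF assms, of n]
      by (intro divide_left_mono) auto
    then show "1 / qprod q n \<le> (1 / 2) ^ n"
      by (simp add: power_one_over)
  qed
qed simp

lemma ln_qprod_eq_sum:
  assumes "basic_seq q"
  shows "ln (qprod q n) = (\<Sum>k = 1..n. ln (real (q k)))"
proof -
  have "real (q k) \<noteq> 0" if "k \<in> {1..n}" for k
    using assms that by (auto simp: basic_seq_def)
  then show ?thesis
    unfolding qprod_def by (intro ln_prod) auto
qed

lemma ln_qprod_superlinear: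
  assumes "basic_seq q" "infinite_in_limit q"
  shows "\<forall>\<^sub>F n in sequentially. c * real n \<le> ln (qprod q n)"
proof -
  define c' where "c' = max c 0"
  have "\<forall>\<^sub>F k in sequentially. exp (2 * c') \<le> real (q k)"
    using filterlim_compose[OF filterlim_real_sequentially assms(2)[unfolded infinite_in_limit_def]]
    unfolding filterlim_at_top by simp
  then obtain K0 where K0: "\<And>k. K0 \<le> k \<Longrightarrow> exp (2 * c') \<le> real (q k)"
    unfolding eventually_sequentially by blast
  define K where "K = Suc K0"
  have K: "2 * c' \<le> ln (real (q k))" if "K \<le> k" for k
  proof -
    have "0 < real (q k)"
      using K0[of k] that exp_gt_zero[of "2 * c'"] unfolding K_def by linarith
    then show ?thesis
      using K0[of k] that unfolding K_def by (simp add: ln_ge_iff)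
  qed
  have ln_q_nonneg: "0 \<le> ln (real (q k))" if "1 \<le> k" for k
  proof -
    have "2 \<le> q k"
      using assms(1) that by (simp add: basic_seq_def)
    then show ?thesis
      by simp
  qed
  have "c * real n \<le> ln (qprod q n)" if n: "2 * K \<le> n" for n
  proof -
    have "c * real n \<le> c' * (2 * real (Suc n - K))"
      using n unfolding c'_def by (intro mult_mono) (auto simp: of_nat_diff)
    also have "\<dots> = (\<Sum>k = K..n. 2 * c')"
      by (simp add: mult_ac)
    also have "\<dots> \<le> (\<Sum>k = K..n. ln (real (q k)))"
      using K by (intro sum_mono) auto
    also have "\<dots> \<le> (\<Sum>k = 1..n. ln (real (q k)))"
      using ln_q_nonneg by (intro sum_mono2) (auto simp: K_def)
    finally show ?thesis
      by (simp add: ln_qprod_eq_sum[OF assms(1)])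
  qed
  then show ?thesis
    unfolding eventually_sequentially by blast
qed

lemma telescoping_tail_bound:
  fixes f g :: "nat \<Rightarrow> real"
  assumes "\<And>m. 0 \<le> f m" "\<And>m. f m \<le> g m - g (Suc m)" "g \<longlonglongrightarrow> 0"
  shows "summable (\<lambda>m. f (m + n))" and "(\<Sum>m. f (m + n)) \<le> g n"
proof -
  have telescope: "(\<lambda>m. g (m + n) - g (Suc (m + n))) sums g n"
    using telescope_sums'[OF LIMSEQ_ignore_initial_segment[OF assms(3)], of n] by simp
  show "summable (\<lambda>m. f (m + n))"
    using assms(1,2) by (intro summable_comparison_test'[OF sums_summable[OF telescope]]) auto
  then have "(\<Sum>m. f (m + n)) \<le> (\<Sum>m. g (m + n) - g (Suc (m + n)))"
    using assms(2) sums_summable[OF telescope] by (intro suminf_le) auto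
  then show "(\<Sum>m. f (m + n)) \<le> g n"
    using sums_unique[OF telescope, symmetric] by simp
qed

lemma cantor_term_bounds:
  assumes "basic_seq q" "0 \<le> e" "e \<le> int (q (Suc m)) - 1"
  shows "0 \<le> real_of_int e / qprod q (Suc m)"
    and "real_of_int e / qprod q (Suc m) \<le> 1 / qprod q m - 1 / qprod q (Suc m)"
proof -
  have P: "0 < qprod q (Suc m)"
    by (rule qprod_pos[OF assms(1)])
  then show "0 \<le> real_of_int e / qprod q (Suc m)"
    using assms(2) by simp
  have "real_of_int e \<le> real (q (Suc m)) - 1"
    using assms(3) by linarith
  then have "real_of_int e / qprod q (Suc m) \<le> (real (q (Suc m)) - 1) / qprod q (Suc m)"
    using P by (intro divide_right_mono) auto
  also have "\<dots> = 1 / qprod q m - 1 / qprod q (Suc m)"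
  proof -
    have "2 \<le> q (Suc m)"
      using assms(1) by (simp add: basic_seq_def)
    then show ?thesis
      by (simp add: qprod_Suc diff_divide_distrib)
  qed
  finally show "real_of_int e / qprod q (Suc m) \<le> 1 / qprod q m - 1 / qprod q (Suc m)" .
qed

lemma cantor_series_bounds:
  assumes "basic_seq q" and digits: "\<And>k. 1 \<le> k \<Longrightarrow> 0 \<le> d k \<and> d k \<le> int (q k) - 1"
  shows "cantor_partial q d n \<le> (\<Sum>m. real_of_int (d (Suc m)) / qprod q (Suc m))"
    and "(\<Sum>m. real_of_int (d (Suc m)) / qprod q (Suc m)) \<le> cantor_partial q d n + 1 / qprod q n"
proof -
  define f where "f m = real_of_int (d (Suc m)) / qprod q (Suc m)" for m
  have f: "0 \<le> f m" "f m \<le> 1 / qprod q m - 1 / qprod q (Suc m)" for m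
    unfolding f_def using cantor_term_bounds[OF assms(1)] digits[of "Suc m"] by auto
  note tail = telescoping_tail_bound[OF f inverse_qprod_tendsto_0[OF assms(1)]]
  have "(\<Sum>i<n. f i) = cantor_partial q d n"
    by (induction n) (simp_all add: f_def cantor_partial_Suc)
  then have split: "(\<Sum>m. f m) = (\<Sum>m. f (m + n)) + cantor_partial q d n"
    using suminf_split_initial_segment[of f n] tail(1)[of 0] by simp
  have series: "(\<Sum>m. real_of_int (d (Suc m)) / qprod q (Suc m)) = (\<Sum>m. f m)"
    unfolding f_def ..
  have "0 \<le> (\<Sum>m. f (m + n))"
    using tail(1) f(1) by (intro suminf_nonneg) auto
  then show "cantor_partial q d n \<le> (\<Sum>m. real_of_int (d (Suc m)) / qprod q (Suc m))"
    unfolding series split by simp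
  show "(\<Sum>m. real_of_int (d (Suc m)) / qprod q (Suc m)) \<le> cantor_partial q d n + 1 / qprod q n"
    unfolding series split using tail(2)[of n] by simp
qed

lemma card_cantor_partials_le:
  assumes "\<And>k. 1 \<le> k \<Longrightarrow> k \<le> n \<Longrightarrow> finite ((\<lambda>d. d k) ` D) \<and> card ((\<lambda>d. d k) ` D) \<le> M"
  shows "finite ((\<lambda>d. cantor_partial q d n) ` D) \<and> card ((\<lambda>d. cantor_partial q d n) ` D) \<le> M ^ n"
  using assms
proof (induction n)
  case 0
  have "(\<lambda>d. cantor_partial q d 0) ` D \<subseteq> {0}"
    by auto
  then have "card ((\<lambda>d. cantor_partial q d 0) ` D) \<le> card {0::real}"
    by (rule card_mono[rotated]) simp
  then show ?case
    using finite_subset[OF \<open>_ \<subseteq> {0}\<close>] by simp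
next
  case (Suc n)
  define P where "P = (\<lambda>d. cantor_partial q d n) ` D"
  define V where "V = (\<lambda>d. d (Suc n)) ` D"
  have P: "finite P" "card P \<le> M ^ n" and V: "finite V" "card V \<le> M"
    using Suc by (auto simp: P_def V_def)
  have "(\<lambda>d. cantor_partial q d (Suc n)) ` D
      \<subseteq> (\<lambda>(x, e). x + real_of_int e / qprod q (Suc n)) ` (P \<times> V)"
    by (auto simp: P_def V_def cantor_partial_Suc)
  moreover have "card ((\<lambda>(x, e). x + real_of_int e / qprod q (Suc n)) ` (P \<times> V)) \<le> M ^ Suc n"
  proof -
    have "card ((\<lambda>(x, e). x + real_of_int e / qprod q (Suc n)) ` (P \<times> V)) \<le> card P * card V"
      using card_image_le[of "P \<times> V"] P V by (simp add: card_cartesian_product)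
    also have "\<dots> \<le> M ^ n * M"
      using P V by (intro mult_mono) auto
    finally show ?thesis
      by (simp add: mult.commute)
  qed
  moreover have "finite ((\<lambda>(x, e). x + real_of_int e / qprod q (Suc n)) ` (P \<times> V))"
    using P V by simp
  ultimately show ?case
    using card_mono finite_subset order_trans by metis
qed

lemma ln_card_le_eventually:
  fixes A :: "nat \<Rightarrow> 'a set" and P :: "nat \<Rightarrow> real"
  assumes card: "\<And>n. card (A n) \<le> M ^ n" and "1 \<le> M"
    and superlinear: "\<And>c. \<forall>\<^sub>F n in sequentially. c * real n \<le> ln (P n)" and "0 < e"
  shows "\<forall>\<^sub>F n in sequentially. ln (card (A (Suc n))) \<le> e * ln (P n)"
  using superlinear[of "2 * ln M / e"] eventually_ge_at_top[of 1]
proof eventually_elim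
  case (elim n)
  have lnM: "0 \<le> ln (real M)"
    using assms(2) by simp
  have "ln (card (A (Suc n))) \<le> ln (real M ^ Suc n)"
  proof (cases "card (A (Suc n)) = 0")
    case False
    have "real (card (A (Suc n))) \<le> real M ^ Suc n"
      using card[of "Suc n"] by (metis of_nat_le_iff of_nat_power)
    then show ?thesis
      using False by (intro ln_mono) auto
  qed (use assms(2) one_le_power[of "real M" "Suc n"] in simp)
  also have "\<dots> = real (Suc n) * ln M"
    using assms(2) by (simp add: ln_realpow del: power_Suc)
  also have "\<dots> \<le> 2 * real n * ln M"
    using elim(2) lnM by (intro mult_right_mono) auto
  also have "\<dots> = e * (2 * ln M / e * real n)"
    using assms(4) by simp
  also have "\<dots> \<le> e * ln (P n)"
    using elim(1) assms(4) by (intro mult_left_mono) auto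
  finally show ?case .
qed

lemma Lq_ge: "i \<le> Lq q i"
proof (induction i)
  case (Suc i)
  have "1 \<le> lstep q i (Lq q i)"
    by (simp add: lstep_def)
  then have "1 \<le> Suc i * lstep q i (Lq q i)"
    by simp
  then show ?case
    using Suc by simp
qed simp

lemma phiQ_surj_upto:
  assumes "1 \<le> n" "n \<le> Lq q i"
  shows "n \<in> phiQ q ` SQ q"
  using assms(2)
proof (induction i)
  case (Suc i)
  show ?case
  proof (cases "n \<le> Lq q i")
    case False
    define r where "r = n - Lq q i - 1"
    define b where "b = r div Suc i + 1"
    define c where "c = r mod Suc i + 1"
    define l where "l = lq q (Suc i)"
    have "r < Suc i * l"
      using False Suc.prems unfolding r_def l_def by simp
    then have "r div Suc i < l"
      by (simp add: div_less_iff_less_mult mult.commute)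
    then have "b \<le> lq q (Suc i)"
      unfolding b_def l_def by simp
    then have "(Suc i, b, c) \<in> SQ q"
      unfolding SQ_def by (simp add: b_def c_def)
    moreover have "phiQ q (Suc i, b, c) = n"
      using False div_mult_mod_eq[of r "Suc i"] unfolding phiQ_def b_def c_def r_def by simp
    ultimately show ?thesis
      by force
  qed (use Suc in auto)
qed (use assms(1) in simp)

lemma phiQ_surj: "1 \<le> n \<Longrightarrow> n \<in> phiQ q ` SQ q"
  using phiQ_surj_upto Lq_ge by blast

lemma special_interval_in_unit:
  fixes a c :: nat
  assumes "2 \<le> c" "c \<le> a"
  shows "0 < (real c - 1) / real a - 1 / (2 * real a ^ 2)"
    and "(real c - 1) / real a + 1 / (2 * real a ^ 2) < 1"
proof -
  have a: "1 \<le> real a"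
    using assms by simp
  have half: "1 / (2 * real a ^ 2) < 1 / real a"
    using a by (simp add: divide_simps power2_eq_square)
  have "1 / real a \<le> (real c - 1) / real a"
    using assms a by (simp add: divide_right_mono)
  then show "0 < (real c - 1) / real a - 1 / (2 * real a ^ 2)"
    using half by linarith
  have "(real c - 1) / real a \<le> (real a - 1) / real a"
    using assms a by (simp add: divide_right_mono)
  also have "\<dots> = 1 - 1 / real a"
    using a by (simp add: field_simps)
  finally show "(real c - 1) / real a + 1 / (2 * real a ^ 2) < 1"
    using half by linarith
qed

lemma EF_bounds:
  assumes "basic_seq q" "F \<in> GammaQ q" "1 \<le> n"
  shows "0 \<le> EF q F n \<and> EF q F n \<le> int (q n) - 1"
proof -
  define x where "x = inv_into (SQ q) (phiQ q) n"
  have "x \<in> SQ q" "phiQ q x = n"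
    unfolding x_def using phiQ_surj[OF assms(3)] by (auto intro: inv_into_into f_inv_into_f)
  moreover obtain a b c where x: "x = (a, b, c)"
    by (cases x) auto
  ultimately have abc: "(a, b, c) \<in> SQ q" "1 \<le> c" "c \<le> a" and n: "phiQ q (a, b, c) = n"
    unfolding SQ_def by auto
  have q: "2 \<le> q n"
    using assms(1,3) by (simp add: basic_seq_def)
  have E: "EF q F n = F (a, b, c)"
    unfolding EF_def x_def[symmetric] x ..
  show ?thesis
  proof (cases "c = 1")
    case True
    then show ?thesis
      using assms(2) abc(1) q unfolding E GammaQ_def by auto
  next
    case False
    then have "real_of_int (F (a, b, c)) / real (q n) \<in> {(real c - 1) / real a - 1 / (2 * real a ^ 2) ..
        (real c - 1) / real a + 1 / (2 * real a ^ 2)}"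
      using assms(2) abc n unfolding GammaQ_def by auto
    then have "0 < real_of_int (F (a, b, c)) / real (q n)" "real_of_int (F (a, b, c)) / real (q n) < 1"
      using special_interval_in_unit[of c a] False abc by auto
    then show ?thesis
      using q unfolding E by (simp add: zero_less_divide_iff divide_less_eq)
  qed
qed

lemma ThetaQ_interval_cover:
  assumes "basic_seq q"
  shows "ThetaQ q \<subseteq> (\<Union>a\<in>(\<lambda>F. cantor_partial q (EF q F) n) ` GammaQ q. {a..a + 1 / qprod q n})"
proof
  fix x assume "x \<in> ThetaQ q"
  then obtain F where F: "F \<in> GammaQ q" "x = xF q F"
    unfolding ThetaQ_def by auto
  have "xF q F = (\<Sum>m. real_of_int (EF q F (Suc m)) / qprod q (Suc m))"
    unfolding xF_def qprod_def ..
  then have "x \<in> {cantor_partial q (EF q F) n..cantor_partial q (EF q F) n + 1 / qprod q n}"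
    using cantor_series_bounds[OF assms, of "EF q F"] EF_bounds[OF assms F(1)] F(2) by simp
  then show "x \<in> (\<Union>a\<in>(\<lambda>F. cantor_partial q (EF q F) n) ` GammaQ q. {a..a + 1 / qprod q n})"
    using F(1) by blast
qed

lemma card_ThetaQ_partials_le:
  assumes "basic_seq q" "\<And>n. 1 \<le> n \<Longrightarrow> omegaQ q n \<le> M"
  shows "finite ((\<lambda>F. cantor_partial q (EF q F) n) ` GammaQ q)
    \<and> card ((\<lambda>F. cantor_partial q (EF q F) n) ` GammaQ q) \<le> M ^ n"
proof -
  define D where "D = EF q ` GammaQ q"
  have "finite ((\<lambda>d. d k) ` D) \<and> card ((\<lambda>d. d k) ` D) \<le> M" if "1 \<le> k" for k
  proof
    have "(\<lambda>d. d k) ` D \<subseteq> {0..int (q k) - 1}"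
      using EF_bounds[OF assms(1) _ that] unfolding D_def by auto
    then show "finite ((\<lambda>d. d k) ` D)"
      by (rule finite_subset) simp
    show "card ((\<lambda>d. d k) ` D) \<le> M"
      using assms(2)[OF that] unfolding D_def omegaQ_def image_image .
  qed
  then show ?thesis
    using card_cantor_partials_le[of n D M q] unfolding D_def image_image by blast
qed

theorem mainTheorem6:
  fixes q :: "nat \<Rightarrow> nat"
  assumes "basic_seq q"
    and "infinite_in_limit q"
    and "\<exists>M::nat. \<forall>n\<ge>1. omegaQ q n \<le> M"
  shows "hausdorff_dim (ThetaQ q) = 0 \<and> has_box_dim (ThetaQ q) 0"
proof -
  obtain M :: nat where M: "1 \<le> M" "\<And>n. 1 \<le> n \<Longrightarrow> omegaQ q n \<le> M"
    using assms(3) by (metis le_cases le_trans)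
  define A where "A n = (\<lambda>F. cantor_partial q (EF q F) n) ` GammaQ q" for n
  have A: "finite (A n) \<and> card (A n) \<le> M ^ n" for n
    unfolding A_def by (rule card_ThetaQ_partials_le[OF assms(1) M(2)])
  have "\<forall>\<^sub>F n in sequentially. ln (card (A (Suc n))) \<le> e * - ln (1 / qprod q n)" if "0 < e" for e
  proof -
    have "- ln (1 / qprod q n) = ln (qprod q n)" for n
      using qprod_pos[OF assms(1), of n] by (simp add: ln_div)
    moreover have "\<forall>\<^sub>F n in sequentially. ln (card (A (Suc n))) \<le> e * ln (qprod q n)"
      using A M(1) ln_qprod_superlinear[OF assms(1,2)] that by (intro ln_card_le_eventually) auto
    ultimately show ?thesis
      by simp
  qed
  moreover have "ThetaQ q \<subseteq> (\<Union>a\<in>A n. {a..a + 1 / qprod q n})" for n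
    unfolding A_def by (rule ThetaQ_interval_cover[OF assms(1)])
  ultimately show ?thesis
    using A qprod_pos[OF assms(1)] inverse_qprod_tendsto_0[OF assms(1)]
    by (intro dims_eq_0_if_interval_covers[of A]) auto
qed

end
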